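(* For $n,i\in\mathbb{N}=\{1,2,\dots\}$, $$\int_{-\infty}^{\infty}\frac{|t|^i}{i!}|h_n(t)|\,dt\le\frac{1}{\sqrt{2^n\,n!\,i!\,\sqrt{\pi}}}.$$
   Context: $H_n$ denotes the $n$-th Hermite polynomial ($H_n(t)=(-1)^ne^{t^2}\frac{d^n}{dt^n}e^{-t^2}$, so $H_0=1$, $H_1(t)=2t$, $H_2(t)=4t^2-2$), and the Hermite functions are $h_n(t)=\frac{1}{2^nn!\sqrt{\pi}}e^{-t^2}H_n(t)$, $t\in\mathbb{R}$. *)

theory Defs
  imports "HOL-Analysis.Analysis"
begin

definition hermite_poly :: "nat \<Rightarrow> real \<Rightarrow> real" where
  "hermite_poly n t = (-1) ^ n * exp (t\<^sup>2) * ((deriv ^^ n) (\<lambda>s. exp (- (s\<^sup>2))) t)"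

definition hermite_fun :: "nat \<Rightarrow> real \<Rightarrow> real" where
  "hermite_fun n t = exp (- (t\<^sup>2)) * hermite_poly n t / (2 ^ n * fact n * sqrt pi)"

end

theory Submission
  imports Defs "HOL-Probability.Distributions" "HOL-Computational_Algebra.Polynomial"
begin

text \<open>
  Write h_n = H_n e^(-t^2) / c_n with c_n = 2^n n! sqrt pi and split the weight e^(-t^2) evenly
  between t^i / i! and H_n / c_n. Cauchy--Schwarz (in the form of a weighted AM--GM inequality)
  bounds the integral by the square root of the product of int t^(2i) e^(-t^2) / i!^2 and
  int H_n^2 e^(-t^2) / c_n^2. The second factor is exactly 1 / c_n by the orthogonality relation
  int H_n^2 e^(-t^2) = c_n, which follows from integration by parts
  int p' e^(-t^2) = int 2t p e^(-t^2). The first is at most 1 / i!, since the Gaussian moment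
  int t^(2i) e^(-t^2) = (2i-1)!! sqrt pi / 2^i is at most i! for i >= 1.
\<close>

definition gauss_moment :: "nat \<Rightarrow> real" where
  "gauss_moment k = (\<integral>x. x ^ k * exp (- x\<^sup>2) \<partial>lborel)"

lemma has_bochner_integral_gauss_moment_even:
  "has_bochner_integral lborel (\<lambda>x::real. x ^ (2 * k) * exp (- x\<^sup>2))
     (sqrt pi * (fact (2 * k) / (2 ^ (2 * k) * fact k)))"
  using has_bochner_integral_even_function[OF gaussian_moment_even_pos[where k=k]]
  by (simp add: mult.commute)

lemma has_bochner_integral_gauss_moment_odd:
  "has_bochner_integral lborel (\<lambda>x::real. x ^ (2 * k + 1) * exp (- x\<^sup>2)) 0"
  using has_bochner_integral_odd_function[OF gaussian_moment_odd_pos[where k=k]]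
  by (simp add: mult.commute)

lemma integrable_gauss_moment: "integrable lborel (\<lambda>x::real. x ^ k * exp (- x\<^sup>2))"
proof (cases "even k")
  case True
  then obtain j where "k = 2 * j" by (auto elim: evenE)
  then show ?thesis
    using has_bochner_integral_gauss_moment_even[of j] by (auto intro: integrable.intros)
next
  case False
  then obtain j where "k = 2 * j + 1" by (auto elim: oddE)
  then show ?thesis
    using has_bochner_integral_gauss_moment_odd[of j] by (auto intro: integrable.intros)
qed

lemma gauss_moment_even:
  "gauss_moment (2 * k) = sqrt pi * (fact (2 * k) / (2 ^ (2 * k) * fact k))"
  unfolding gauss_moment_def
  using has_bochner_integral_gauss_moment_even by (rule has_bochner_integral_integral_eq)

lemma gauss_moment_odd: "gauss_moment (2 * k + 1) = 0"
  unfolding gauss_moment_def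
  using has_bochner_integral_gauss_moment_odd by (rule has_bochner_integral_integral_eq)

lemma gauss_moment_0: "gauss_moment 0 = sqrt pi"
  using gauss_moment_even[of 0] by simp

lemma gauss_moment_1: "gauss_moment 1 = 0"
  using gauss_moment_odd[of 0] by simp

lemma gauss_moment_Suc_Suc:
  "gauss_moment (Suc (Suc k)) = (real k + 1) / 2 * gauss_moment k"
proof (cases "even k")
  case True
  then obtain j where k: "k = 2 * j" by (auto elim: evenE)
  have "Suc (Suc k) = 2 * Suc j" using k by simp
  then have "gauss_moment (Suc (Suc k))
      = sqrt pi * (fact (2 * Suc j) / (2 ^ (2 * Suc j) * fact (Suc j)))"
    using gauss_moment_even by metis
  also have "\<dots> = (real k + 1) / 2 * (sqrt pi * (fact (2 * j) / (2 ^ (2 * j) * fact j)))"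
    unfolding k by (simp add: field_simps del: fact_Suc) (simp add: field_simps)
  finally show ?thesis using gauss_moment_even k by simp
next
  case False
  then obtain j where k: "k = 2 * j + 1" by (auto elim: oddE)
  have "Suc (Suc k) = 2 * Suc j + 1" using k by simp
  then show ?thesis using gauss_moment_odd k by (metis mult_zero_right)
qed

lemma gauss_moment_even_le_fact:
  assumes "i \<ge> 1"
  shows "gauss_moment (2 * i) \<le> fact i"
  using assms
proof (induction i rule: nat_induct_at_least)
  case base
  have "sqrt pi \<le> sqrt 4" using pi_less_4 by (intro real_sqrt_le_mono) simp
  then show ?case
    using gauss_moment_Suc_Suc[of 0] by (simp add: numeral_2_eq_2 gauss_moment_0)
next
  case (Suc i)
  have "gauss_moment (2 * Suc i) = (real (2 * i) + 1) / 2 * gauss_moment (2 * i)"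
    using gauss_moment_Suc_Suc[of "2 * i"] by simp
  also have "\<dots> \<le> (real i + 1) * fact i"
    using Suc.IH by (intro mult_mono) (auto simp: gauss_moment_even)
  finally show ?case by (simp add: algebra_simps)
qed

definition gauss_integral :: "real poly \<Rightarrow> real" where
  "gauss_integral p = (\<integral>x. poly p x * exp (- x\<^sup>2) \<partial>lborel)"

lemma integrable_poly_gauss: "integrable lborel (\<lambda>x. poly (p :: real poly) x * exp (- x\<^sup>2))"
proof -
  have "integrable lborel (\<lambda>x. \<Sum>k\<le>degree p. coeff p k * (x ^ k * exp (- x\<^sup>2)))"
    by (intro Bochner_Integration.integrable_sum integrable_mult_right integrable_gauss_moment)
  then show ?thesis
    by (simp add: poly_altdef sum_distrib_right mult.assoc)
qed

lemma gauss_integral_add: "gauss_integral (p + q) = gauss_integral p + gauss_integral q"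
  unfolding gauss_integral_def by (simp add: distrib_right integrable_poly_gauss)

lemma gauss_integral_diff: "gauss_integral (p - q) = gauss_integral p - gauss_integral q"
  unfolding gauss_integral_def by (simp add: left_diff_distrib integrable_poly_gauss)

lemma gauss_integral_smult: "gauss_integral (smult c p) = c * gauss_integral p"
  unfolding gauss_integral_def by (simp add: mult.assoc)

lemma gauss_integral_0 [simp]: "gauss_integral 0 = 0"
  by (simp add: gauss_integral_def)

lemma gauss_integral_sum: "gauss_integral (\<Sum>k\<in>A. f k) = (\<Sum>k\<in>A. gauss_integral (f k))"
  by (induction A rule: infinite_finite_induct) (simp_all add: gauss_integral_add)

lemma gauss_integral_monom: "gauss_integral (monom c k) = c * gauss_moment k"
  unfolding gauss_integral_def gauss_moment_def by (simp add: poly_monom mult.assoc)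

lemma gauss_integral_monom_square_le:
  assumes "i \<ge> 1"
  shows "gauss_integral (monom (1 / fact i) i * monom (1 / fact i) i) \<le> 1 / fact i"
proof -
  have "gauss_integral (monom (1 / fact i) i * monom (1 / fact i) i)
      = gauss_moment (2 * i) / (fact i * fact i)"
    by (simp add: mult_monom gauss_integral_monom mult_2)
  also have "\<dots> \<le> fact i / (fact i * fact i)"
    using gauss_moment_even_le_fact[OF assms] by (rule divide_right_mono) simp
  finally show ?thesis by simp
qed

text \<open>Integration by parts against e^(-x^2), whose derivative is -2x e^(-x^2); on monomials
  it is exactly the moment recursion.\<close>

lemma gauss_integral_pderiv_monom:
  "gauss_integral (pderiv (monom c k)) = gauss_integral ([:0, 2:] * monom c k)"
proof -
  have shift: "[:0, 2:] * monom c k = monom (2 * c) (Suc k)"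
    by (simp add: monom_Suc smult_monom)
  show ?thesis
  proof (cases k)
    case 0
    then show ?thesis
      unfolding shift using gauss_moment_1 by (simp add: gauss_integral_monom pderiv_monom)
  next
    case (Suc j)
    have "2 * gauss_moment (Suc (Suc j)) = (real j + 1) * gauss_moment j"
      by (simp add: gauss_moment_Suc_Suc)
    then show ?thesis
      unfolding shift using Suc by (simp add: gauss_integral_monom pderiv_monom algebra_simps)
  qed
qed

lemma gauss_integral_pderiv: "gauss_integral (pderiv p) = gauss_integral ([:0, 2:] * p)"
proof -
  have "gauss_integral (pderiv p) = gauss_integral (pderiv (\<Sum>k\<le>degree p. monom (coeff p k) k))"
    by (simp add: poly_as_sum_of_monoms)
  also have "\<dots> = (\<Sum>k\<le>degree p. gauss_integral ([:0, 2:] * monom (coeff p k) k))"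
    by (simp add: higher_pderiv_sum[of 1, simplified] gauss_integral_sum
        gauss_integral_pderiv_monom)
  also have "\<dots> = gauss_integral ([:0, 2:] * (\<Sum>k\<le>degree p. monom (coeff p k) k))"
    by (simp only: gauss_integral_sum sum_distrib_left)
  finally show ?thesis by (simp only: poly_as_sum_of_monoms)
qed

subsection \<open>Cauchy--Schwarz via weighted AM--GM\<close>

lemma abs_mult_le_weighted_squares:
  fixes x y l :: real
  assumes "l > 0"
  shows "\<bar>x * y\<bar> \<le> (l * x\<^sup>2 + y\<^sup>2 / l) / 2"
proof -
  have "0 \<le> (l * \<bar>x\<bar> - \<bar>y\<bar>)\<^sup>2" by simp
  then have "l * (2 * \<bar>x * y\<bar>) \<le> y\<^sup>2 + l * (l * x\<^sup>2)"
    by (simp add: power2_eq_square algebra_simps abs_mult)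
  then show ?thesis using assms by (simp add: field_simps)
qed

text \<open>The AM--GM weight l = sqrt (B / A) balances both terms to sqrt (A B).\<close>

lemma nn_integral_abs_mult_le_sqrt:
  fixes f g :: "'a \<Rightarrow> real"
  assumes f: "integrable M (\<lambda>x. (f x)\<^sup>2)" and g: "integrable M (\<lambda>x. (g x)\<^sup>2)"
    and A: "(\<integral>x. (f x)\<^sup>2 \<partial>M) \<le> A" "A > 0"
    and B: "(\<integral>x. (g x)\<^sup>2 \<partial>M) \<le> B" "B > 0"
  shows "(\<integral>\<^sup>+x. ennreal \<bar>f x * g x\<bar> \<partial>M) \<le> ennreal (sqrt (A * B))"
proof -
  define l where "l = sqrt (B / A)"
  have l: "l > 0" using A B by (simp add: l_def)
  have "(\<integral>\<^sup>+x. ennreal \<bar>f x * g x\<bar> \<partial>M) \<le> (\<integral>\<^sup>+x. ennreal ((l * (f x)\<^sup>2 + (g x)\<^sup>2 / l) / 2) \<partial>M)"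
    by (intro nn_integral_mono ennreal_leI abs_mult_le_weighted_squares l)
  also have "\<dots> = ennreal (\<integral>x. (l * (f x)\<^sup>2 + (g x)\<^sup>2 / l) / 2 \<partial>M)"
    using f g l by (intro nn_integral_eq_integral) auto
  also have "\<dots> \<le> ennreal ((l * A + B / l) / 2)"
    using f g l A B by (intro ennreal_leI) (auto intro!: add_mono mult_left_mono divide_right_mono)
  also have "(l * A + B / l) / 2 = sqrt (A * B)"
    using A B by (simp add: l_def field_simps real_sqrt_divide real_sqrt_mult)
  finally show ?thesis .
qed

lemma nn_integral_abs_poly_mult_gauss_le:
  fixes p q :: "real poly"
  assumes "gauss_integral (p * p) \<le> A" "A > 0" and "gauss_integral (q * q) \<le> B" "B > 0"
  shows "(\<integral>\<^sup>+t. ennreal \<bar>poly p t * poly q t * exp (- t\<^sup>2)\<bar> \<partial>lborel) \<le> ennreal (sqrt (A * B))"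
proof -
  have half_weight: "(\<lambda>t. (poly r t * exp (- t\<^sup>2 / 2))\<^sup>2) = (\<lambda>t. poly (r * r) t * exp (- t\<^sup>2))"
    for r :: "real poly"
    by (simp add: fun_eq_iff power2_eq_square algebra_simps flip: exp_add)
  have "poly p t * poly q t * exp (- t\<^sup>2)
      = (poly p t * exp (- t\<^sup>2 / 2)) * (poly q t * exp (- t\<^sup>2 / 2))" for t
    by (simp add: algebra_simps flip: exp_add)
  moreover have "(\<integral>\<^sup>+t. ennreal \<bar>(poly p t * exp (- t\<^sup>2 / 2)) * (poly q t * exp (- t\<^sup>2 / 2))\<bar> \<partial>lborel)
      \<le> ennreal (sqrt (A * B))"
    using assms
    by (intro nn_integral_abs_mult_le_sqrt)
      (simp_all only: half_weight integrable_poly_gauss flip: gauss_integral_def)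
  ultimately show ?thesis by (simp only:)
qed

fun hermite :: "nat \<Rightarrow> real poly" where
  "hermite 0 = 1"
| "hermite (Suc n) = [:0, 2:] * hermite n - pderiv (hermite n)"

declare hermite.simps(2) [simp del]

lemma pderiv_hermite: "pderiv (hermite (Suc n)) = smult (2 * (real n + 1)) (hermite n)"
proof (induction n)
  case 0
  then show ?case by (simp add: pderiv_pCons hermite.simps)
next
  case (Suc n)
  have "pderiv (hermite (Suc (Suc n)))
      = pderiv ([:0, 2:] * hermite (Suc n)) - pderiv (pderiv (hermite (Suc n)))"
    by (simp only: hermite.simps(2) pderiv_diff)
  also have "\<dots> = [:0, 2:] * smult (2 * (real n + 1)) (hermite n) + smult 2 (hermite (Suc n))
      - smult (2 * (real n + 1)) (pderiv (hermite n))"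
    using Suc by (simp add: pderiv_mult pderiv_pCons pderiv_smult)
  also have "\<dots> = smult 2 (hermite (Suc n)) + smult (2 * (real n + 1)) (hermite (Suc n))"
    unfolding hermite.simps(2)[of n] smult_diff_right mult_smult_right by simp
  also have "\<dots> = smult (2 * (real (Suc n) + 1)) (hermite (Suc n))"
    by (simp add: algebra_simps flip: smult_add_left)
  finally show ?case .
qed

text \<open>Since H_(n+1) = 2x H_n - H_n', integrating (H_(n+1) H_n)' by parts turns
  int H_(n+1)^2 e^(-x^2) into int H_n H_(n+1)' e^(-x^2) = 2(n+1) int H_n^2 e^(-x^2).\<close>

lemma gauss_integral_hermite_square:
  "gauss_integral (hermite n * hermite n) = 2 ^ n * fact n * sqrt pi"
proof (induction n)
  case 0
  then show ?case using gauss_integral_monom[of 1 0] by (simp add: gauss_moment_0 one_pCons)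
next
  case (Suc n)
  let ?H = "hermite (Suc n)" and ?h = "hermite n"
  have "gauss_integral (?H * pderiv ?h) + gauss_integral (?h * pderiv ?H)
      = gauss_integral ([:0, 2:] * (?H * ?h))"
    using gauss_integral_pderiv[of "?H * ?h"] by (simp add: pderiv_mult gauss_integral_add)
  moreover have "?H * ?H = [:0, 2:] * (?H * ?h) - ?H * pderiv ?h"
    by (subst (2) hermite.simps(2)) (simp only: right_diff_distrib mult.left_commute)
  ultimately have "gauss_integral (?H * ?H) = gauss_integral (?h * pderiv ?H)"
    by (simp add: gauss_integral_diff)
  also have "\<dots> = 2 * (real n + 1) * gauss_integral (?h * ?h)"
    by (simp add: pderiv_hermite gauss_integral_smult)
  finally show ?case using Suc by simp
qed

lemma higher_deriv_gaussian:
  "(deriv ^^ n) (\<lambda>s. exp (- s\<^sup>2)) = (\<lambda>s. (-1) ^ n * poly (hermite n) s * exp (- s\<^sup>2))"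
proof (induction n)
  case 0
  then show ?case by simp
next
  case (Suc n)
  have "deriv (\<lambda>s. (-1) ^ n * poly (hermite n) s * exp (- s\<^sup>2)) t
      = (-1) ^ Suc n * poly (hermite (Suc n)) t * exp (- t\<^sup>2)" for t
  proof (rule DERIV_imp_deriv)
    show "((\<lambda>s. (-1) ^ n * poly (hermite n) s * exp (- s\<^sup>2)) has_real_derivative
        (-1) ^ Suc n * poly (hermite (Suc n)) t * exp (- t\<^sup>2)) (at t)"
      by (auto intro!: derivative_eq_intros simp: hermite.simps(2) algebra_simps)
  qed
  then show ?case using Suc by auto
qed

lemma hermite_poly_eq_poly_hermite: "hermite_poly n t = poly (hermite n) t"
proof -
  have "hermite_poly n t = ((-1) ^ n * (-1) ^ n) * (exp (t\<^sup>2) * exp (- t\<^sup>2)) * poly (hermite n) t"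
    unfolding hermite_poly_def higher_deriv_gaussian by (simp add: algebra_simps)
  also have "\<dots> = poly (hermite n) t"
    by (simp add: exp_minus flip: power_mult_distrib)
  finally show ?thesis .
qed

theorem proposition3p1:
  fixes n i :: nat
  assumes "n \<ge> 1" and "i \<ge> 1"
  shows "(\<integral>\<^sup>+ t. ennreal (\<bar>t\<bar> ^ i / fact i * \<bar>hermite_fun n t\<bar>) \<partial>lborel)
           \<le> ennreal (1 / sqrt (2 ^ n * fact n * fact i * sqrt pi))"
proof -
  define c where "c = 2 ^ n * fact n * sqrt pi"
  define p :: "real poly" where "p = monom (1 / fact i) i"
  define q where "q = smult (1 / c) (hermite n)"
  have c: "c > 0" by (simp add: c_def)
  have "\<bar>t\<bar> ^ i / fact i * \<bar>hermite_fun n t\<bar> = \<bar>poly p t * poly q t * exp (- t\<^sup>2)\<bar>" for t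
    by (simp add: p_def q_def c_def hermite_fun_def hermite_poly_eq_poly_hermite
        poly_monom abs_mult power_abs)
  moreover have "gauss_integral (p * p) \<le> 1 / fact i"
    unfolding p_def using assms(2) by (rule gauss_integral_monom_square_le)
  moreover have "gauss_integral (q * q) = 1 / c"
    using c by (simp add: q_def gauss_integral_smult gauss_integral_hermite_square
        power2_eq_square flip: c_def)
  ultimately have "(\<integral>\<^sup>+ t. ennreal (\<bar>t\<bar> ^ i / fact i * \<bar>hermite_fun n t\<bar>) \<partial>lborel)
      \<le> ennreal (sqrt (1 / fact i * (1 / c)))"
    using c by (simp only:) (intro nn_integral_abs_poly_mult_gauss_le; simp)
  also have "sqrt (1 / fact i * (1 / c)) = 1 / sqrt (2 ^ n * fact n * fact i * sqrt pi)"
    by (simp add: c_def real_sqrt_divide ac_simps)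
  finally show ?thesis .
qed

end
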